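(* Let $v$ and $v'$ be distinct true twin vertices of a graph $G$ and $S$ a DNS of $G$. Then: (1) for every $x\in\widehat S$ and $i\in\{1,2\}$, if $v'\in N_S^i[x]$ then $v\in N_S^i[x]$; (2) if $v,v'\in\widehat S$, then there exists a DNS $S'$ of $G$ with $\widehat{S'}=\widehat S$ in which $v$ and $v'$ appear consecutively.
   Context: Graphs are finite, simple, undirected; $N[v]$ closed neighborhood; $v,v'$ are true twins if $N[v]=N[v']$. A sequence $S=(v_1,\dots,v_k)$ of distinct vertices is a double neighborhood sequence (DNS) if for each $i$ some $w\in N[v_i]$ satisfies $|\{j<i:w\in N[v_j]\}|\le1$. $\widehat S$ is its vertex set. $N_S^1[v_i]=N[v_i]\setminus\bigcup_{j<i}N[v_j]$ and $N_S^2[v_i]=\{w\in N[v_i]:|\{j<i:w\in N[v_j]\}|=1\}$. *)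

theory Defs
  imports Main
begin

definition simple_graph :: "'a set \<Rightarrow> ('a \<Rightarrow> 'a \<Rightarrow> bool) \<Rightarrow> bool" where
  "simple_graph V E \<longleftrightarrow> finite V \<and> (\<forall>x y. E x y \<longrightarrow> x \<in> V \<and> y \<in> V)
     \<and> (\<forall>x y. E x y \<longrightarrow> E y x) \<and> (\<forall>x. \<not> E x x)"

definition cnbhd :: "'a set \<Rightarrow> ('a \<Rightarrow> 'a \<Rightarrow> bool) \<Rightarrow> 'a \<Rightarrow> 'a set" where
  "cnbhd V E v = {w \<in> V. w = v \<or> E v w}"

definition true_twins :: "'a set \<Rightarrow> ('a \<Rightarrow> 'a \<Rightarrow> bool) \<Rightarrow> 'a \<Rightarrow> 'a \<Rightarrow> bool" where
  "true_twins V E v v' \<longleftrightarrow> v \<in> V \<and> v' \<in> V \<and> cnbhd V E v = cnbhd V E v'"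

definition cover_count :: "'a set \<Rightarrow> ('a \<Rightarrow> 'a \<Rightarrow> bool) \<Rightarrow> 'a list \<Rightarrow> nat \<Rightarrow> 'a \<Rightarrow> nat" where
  "cover_count V E S i w = card {j. j < i \<and> w \<in> cnbhd V E (S ! j)}"

definition is_dns :: "'a set \<Rightarrow> ('a \<Rightarrow> 'a \<Rightarrow> bool) \<Rightarrow> 'a list \<Rightarrow> bool" where
  "is_dns V E S \<longleftrightarrow> distinct S \<and> set S \<subseteq> V \<and>
     (\<forall>i < length S. \<exists>w \<in> cnbhd V E (S ! i). cover_count V E S i w \<le> 1)"

text \<open>Position of a vertex x in S (meaningful for x \<in> set S).\<close>
definition pos :: "'a list \<Rightarrow> 'a \<Rightarrow> nat" where
  "pos S x = length (takeWhile (\<lambda>y. y \<noteq> x) S)"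

definition NS1 :: "'a set \<Rightarrow> ('a \<Rightarrow> 'a \<Rightarrow> bool) \<Rightarrow> 'a list \<Rightarrow> 'a \<Rightarrow> 'a set" where
  "NS1 V E S x = cnbhd V E x - (\<Union>j \<in> {..<pos S x}. cnbhd V E (S ! j))"

definition NS2 :: "'a set \<Rightarrow> ('a \<Rightarrow> 'a \<Rightarrow> bool) \<Rightarrow> 'a list \<Rightarrow> 'a \<Rightarrow> 'a set" where
  "NS2 V E S x = {w \<in> cnbhd V E x. cover_count V E S (pos S x) w = 1}"

end

theory Submission
  imports Defs
begin

text \<open>Twins lie in exactly the same closed neighbourhoods, so no count or set difference of
closed neighbourhoods can tell them apart; this gives (1). For (2), let v come before v' in S
and move v forward to just before v'. The vertices passed over only lose a predecessor, v
inherits the witness of v' (same closed neighbourhood, fewer predecessors), and every other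
vertex keeps its set of predecessors. Since being a DNS only depends on each vertex's closed
neighbourhood and its set of predecessors, and is monotone in both, the result is again a DNS.\<close>

definition earlier :: "'a list \<Rightarrow> 'a \<Rightarrow> 'a set" where
  "earlier S x = set (takeWhile (\<lambda>y. y \<noteq> x) S)"

lemma earlier_nth:
  assumes "distinct S" "i < length S"
  shows "earlier S (S ! i) = set (take i S)"
proof -
  have "takeWhile (\<lambda>y. y \<noteq> S ! i) S = take i S"
    by (rule takeWhile_eq_take_P_nth) (use assms in \<open>auto simp: nth_eq_iff_index_eq\<close>)
  thus ?thesis by (simp add: earlier_def)
qed

lemma earlier_append_left: "x \<in> set A \<Longrightarrow> earlier (A @ R) x = earlier A x"
  by (simp add: earlier_def)

lemma earlier_append_right: "x \<notin> set A \<Longrightarrow> earlier (A @ R) x = set A \<union> earlier R x"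
  unfolding earlier_def by (subst takeWhile_append2) auto

lemma earlier_Cons_self: "earlier (x # R) x = {}"
  by (simp add: earlier_def)

lemma earlier_Cons: "y \<noteq> x \<Longrightarrow> earlier (y # R) x = insert y (earlier R x)"
  by (simp add: earlier_def)

lemma cover_count_eq_card_earlier:
  assumes "distinct S" "i < length S"
  shows "cover_count V E S i w = card {y \<in> earlier S (S ! i). w \<in> cnbhd V E y}"
proof -
  have "{y \<in> earlier S (S ! i). w \<in> cnbhd V E y} = (!) S ` {j. j < i \<and> w \<in> cnbhd V E (S ! j)}"
    using assms by (auto simp: earlier_nth in_set_conv_nth image_iff)
  moreover have "inj_on ((!) S) {j. j < i \<and> w \<in> cnbhd V E (S ! j)}"
    using assms by (auto simp: inj_on_def nth_eq_iff_index_eq)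
  ultimately show ?thesis
    by (simp add: cover_count_def card_image)
qed

lemma is_dns_iff_earlier:
  "is_dns V E S \<longleftrightarrow> distinct S \<and> set S \<subseteq> V \<and>
     (\<forall>x \<in> set S. \<exists>w \<in> cnbhd V E x. card {y \<in> earlier S x. w \<in> cnbhd V E y} \<le> 1)"
proof (cases "distinct S")
  case True
  then show ?thesis
    unfolding is_dns_def all_set_conv_all_nth by (simp add: cover_count_eq_card_earlier)
qed (simp add: is_dns_def)

lemma is_dns_if_dominated:
  assumes "is_dns V E S" "distinct T" "set T \<subseteq> V"
    and "\<And>x. x \<in> set T \<Longrightarrow>
           \<exists>x' \<in> set S. cnbhd V E x' \<subseteq> cnbhd V E x \<and> earlier T x \<subseteq> earlier S x'"
  shows "is_dns V E T"
  unfolding is_dns_iff_earlier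
proof (intro conjI ballI assms(2,3))
  fix x assume "x \<in> set T"
  then obtain x' where x': "x' \<in> set S" "cnbhd V E x' \<subseteq> cnbhd V E x" "earlier T x \<subseteq> earlier S x'"
    using assms(4) by blast
  then obtain w where w: "w \<in> cnbhd V E x'" "card {y \<in> earlier S x'. w \<in> cnbhd V E y} \<le> 1"
    using assms(1) unfolding is_dns_iff_earlier by blast
  have "card {y \<in> earlier T x. w \<in> cnbhd V E y} \<le> card {y \<in> earlier S x'. w \<in> cnbhd V E y}"
    by (rule card_mono) (use x'(3) in \<open>auto simp: earlier_def\<close>)
  with w x'(2) show "\<exists>w \<in> cnbhd V E x. card {y \<in> earlier T x. w \<in> cnbhd V E y} \<le> 1"
    by force
qed

lemma is_dns_move_to_twin:
  assumes dns: "is_dns V E (A @ v # B @ v' # C)" and twins: "cnbhd V E v = cnbhd V E v'"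
  shows "is_dns V E (A @ B @ v # v' # C)"
proof (rule is_dns_if_dominated[OF dns])
  have dist: "distinct (A @ v # B @ v' # C)" "set (A @ v # B @ v' # C) \<subseteq> V"
    using dns by (auto simp: is_dns_def)
  then show "distinct (A @ B @ v # v' # C)" "set (A @ B @ v # v' # C) \<subseteq> V"
    by auto
  fix x assume "x \<in> set (A @ B @ v # v' # C)"
  then consider "x \<in> set A" | "x \<in> set B" | "x = v \<or> x = v'" | "x \<in> set C"
    by auto
  then show "\<exists>x' \<in> set (A @ v # B @ v' # C). cnbhd V E x' \<subseteq> cnbhd V E x \<and>
               earlier (A @ B @ v # v' # C) x \<subseteq> earlier (A @ v # B @ v' # C) x'"
  proof cases
    case 1
    then show ?thesis
      by (intro bexI[of _ x]) (auto simp: earlier_append_left)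
  next
    case 2
    with dist have "x \<notin> set A" "x \<noteq> v"
      by auto
    with 2 show ?thesis
      by (intro bexI[of _ x]) (auto simp: earlier_append_left earlier_append_right earlier_Cons)
  next
    case 3
    with dist twins show ?thesis
      by (intro bexI[of _ v'])
        (auto simp: earlier_append_right earlier_Cons earlier_Cons_self)
  next
    case 4
    with dist have "x \<notin> set A" "x \<noteq> v" "x \<notin> set B" "x \<noteq> v'"
      by auto
    with 4 show ?thesis
      by (intro bexI[of _ x]) (auto simp: earlier_append_left earlier_append_right earlier_Cons)
  qed
qed

lemma split_list_two:
  assumes "x \<in> set xs" "y \<in> set xs" "x \<noteq> y"
  obtains A B C where "xs = A @ x # B @ y # C" | A B C where "xs = A @ y # B @ x # C"
proof -
  obtain P Q where xs: "xs = P @ x # Q"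
    using split_list[OF assms(1)] by blast
  with assms(2,3) consider "y \<in> set P" | "y \<in> set Q"
    by fastforce
  then show ?thesis
  proof cases
    case 1
    then obtain A B where "P = A @ y # B"
      using split_list by metis
    with xs show ?thesis
      by (intro that(2)[of A B Q]) simp
  next
    case 2
    then obtain B C where "Q = B @ y # C"
      using split_list by metis
    with xs show ?thesis
      by (intro that(1)[of P B C]) simp
  qed
qed

lemma true_twins_mem_cnbhd_iff:
  assumes "simple_graph V E" "true_twins V E v v'"
  shows "v \<in> cnbhd V E y \<longleftrightarrow> v' \<in> cnbhd V E y"
proof -
  have "v \<in> V" "v' \<in> V" "cnbhd V E v = cnbhd V E v'"
    using assms(2) by (simp_all add: true_twins_def)
  moreover have "u \<in> cnbhd V E y \<longleftrightarrow> y \<in> cnbhd V E u" if "u \<in> V" for u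
    using assms(1) that unfolding simple_graph_def cnbhd_def by auto
  ultimately show ?thesis
    by metis
qed

lemma NS1_true_twins_iff:
  assumes "simple_graph V E" "true_twins V E v v'"
  shows "v \<in> NS1 V E S x \<longleftrightarrow> v' \<in> NS1 V E S x"
  using true_twins_mem_cnbhd_iff[OF assms] by (simp add: NS1_def)

lemma NS2_true_twins_iff:
  assumes "simple_graph V E" "true_twins V E v v'"
  shows "v \<in> NS2 V E S x \<longleftrightarrow> v' \<in> NS2 V E S x"
  using true_twins_mem_cnbhd_iff[OF assms] by (simp add: NS2_def cover_count_def)

theorem lemma2:
  fixes V :: "'a set" and E :: "'a \<Rightarrow> 'a \<Rightarrow> bool" and v v' :: 'a and S :: "'a list"
  assumes "simple_graph V E"
    and "v \<noteq> v'" and "true_twins V E v v'"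
    and "is_dns V E S"
  shows "(\<forall>x \<in> set S. (v' \<in> NS1 V E S x \<longrightarrow> v \<in> NS1 V E S x)
                      \<and> (v' \<in> NS2 V E S x \<longrightarrow> v \<in> NS2 V E S x))
       \<and> (v \<in> set S \<and> v' \<in> set S \<longrightarrow>
            (\<exists>S'. is_dns V E S' \<and> set S' = set S \<and>
               (\<exists>k. Suc k < length S' \<and>
                  ((S' ! k = v \<and> S' ! Suc k = v') \<or> (S' ! k = v' \<and> S' ! Suc k = v)))))"
proof (intro conjI ballI impI)
  show "v' \<in> NS1 V E S x \<Longrightarrow> v \<in> NS1 V E S x" for x
    using NS1_true_twins_iff[OF assms(1,3)] by blast
  show "v' \<in> NS2 V E S x \<Longrightarrow> v \<in> NS2 V E S x" for x
    using NS2_true_twins_iff[OF assms(1,3)] by blast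
next
  assume "v \<in> set S \<and> v' \<in> set S"
  then have "v \<in> set S" "v' \<in> set S"
    by simp_all
  have twins: "cnbhd V E v = cnbhd V E v'"
    using assms(3) by (simp add: true_twins_def)
  from split_list_two[OF \<open>v \<in> set S\<close> \<open>v' \<in> set S\<close> assms(2)]
  show "\<exists>S'. is_dns V E S' \<and> set S' = set S \<and>
      (\<exists>k. Suc k < length S' \<and> ((S' ! k = v \<and> S' ! Suc k = v') \<or> (S' ! k = v' \<and> S' ! Suc k = v)))"
  proof cases
    case (1 A B C)
    show ?thesis
      using is_dns_move_to_twin[OF assms(4)[unfolded 1] twins] 1
      by (intro exI[of _ "A @ B @ v # v' # C"] conjI exI[of _ "length (A @ B)"])
        (auto simp: nth_append)
  next
    case (2 A B C)
    show ?thesis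
      using is_dns_move_to_twin[OF assms(4)[unfolded 2] twins[symmetric]] 2
      by (intro exI[of _ "A @ B @ v' # v # C"] conjI exI[of _ "length (A @ B)"])
        (auto simp: nth_append)
  qed
qed

end
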